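(* Let $R_7$ be the graph with vertex set $\{u_1,u_2,u_3,w_1,w_2,w_3,w_4\}$ and edge set $\{u_1u_2,u_2u_3,u_1w_1,u_1w_2,u_2w_1,u_2w_2,u_2w_3,u_2w_4,u_3w_3,u_3w_4\}$, and let $T_{10}$ be the graph with vertex set $\{x,v_1,\dots,v_{20}\}$ and edge set $\{xv_i:1\le i\le 20\}\cup\{v_{2i-1}v_{2i}:1\le i\le 10\}$. Let $\psi$ be a proper edge-colouring of the vertex-disjoint union of $R_7$ and $T_{10}$. Then there exist triangles $Q_1\subseteq T_{10}$ and $Q_2\subseteq R_7$ such that $\psi(E(Q_1))\cap\psi(E(Q_2))=\emptyset$.
   Context: An edge-colouring is proper if adjacent edges receive distinct colours. *)

theory Defs
  imports Main
begin

text \<open>Vertices of the vertex-disjoint union of R7 and T10.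
  R7 uses U 1..U 3, W 1..W 4; T10 uses X, V 1..V 20.\<close>
datatype vert = U nat | W nat | X | V nat

text \<open>Simple graphs are given by their edge sets (sets of 2-element vertex sets).\<close>

definition R7_edges :: "vert set set" where
  "R7_edges = {{U 1, U 2}, {U 2, U 3}, {U 1, W 1}, {U 1, W 2}, {U 2, W 1},
               {U 2, W 2}, {U 2, W 3}, {U 2, W 4}, {U 3, W 3}, {U 3, W 4}}"

definition T10_edges :: "vert set set" where
  "T10_edges = {{X, V i} | i. 1 \<le> i \<and> i \<le> 20}
             \<union> {{V (2*i - 1), V (2*i)} | i. 1 \<le> i \<and> i \<le> 10}"

definition union_edges :: "vert set set" where
  "union_edges = R7_edges \<union> T10_edges"

definition proper_edge_colouring :: "'v set set \<Rightarrow> ('v set \<Rightarrow> 'c) \<Rightarrow> bool" where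
  "proper_edge_colouring E \<psi> \<longleftrightarrow>
     (\<forall>e\<in>E. \<forall>f\<in>E. e \<noteq> f \<and> e \<inter> f \<noteq> {} \<longrightarrow> \<psi> e \<noteq> \<psi> f)"

definition triangle_in :: "'v set set \<Rightarrow> 'v \<Rightarrow> 'v \<Rightarrow> 'v \<Rightarrow> bool" where
  "triangle_in E a b c \<longleftrightarrow> distinct [a, b, c] \<and> {a, b} \<in> E \<and> {b, c} \<in> E \<and> {a, c} \<in> E"

definition tri_edges :: "'v \<Rightarrow> 'v \<Rightarrow> 'v \<Rightarrow> 'v set set" where
  "tri_edges a b c = {{a, b}, {b, c}, {a, c}}"

end

theory Submission
  imports Defs
begin

text \<open>Suppose every triangle x v_{2k-1} v_{2k} of T10 meets the colours of every triangle of R7.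
  No single colour meets all four triangles of R7, so each of the ten spoke pairs has a spoke
  coloured from R7. The twenty spoke colours are distinct and R7 has only ten edges, so exactly
  one spoke of each pair is coloured from R7 and the edges of R7 get ten distinct colours. The
  spoke and the rim edge must then meet all four triangles on their own, which forces the spoke
  to have the colour of u1u2 or of u2u3, the edges shared by two triangles. Three pairs cannot
  all do this.\<close>

definition transversal :: "'a set \<Rightarrow> 'a set set \<Rightarrow> bool" where
  "transversal S \<C> \<longleftrightarrow> (\<forall>C\<in>\<C>. S \<inter> C \<noteq> {})"

lemma transversal_mono: "transversal S \<C> \<Longrightarrow> S \<subseteq> S' \<Longrightarrow> transversal S' \<C>"
  unfolding transversal_def by blast

lemma transversal_singleton: "transversal {p} \<C> \<longleftrightarrow> (\<forall>C\<in>\<C>. p \<in> C)"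
  unfolding transversal_def by blast

lemma transversal_Int:
  "transversal S \<C> \<Longrightarrow> (\<And>C. C \<in> \<C> \<Longrightarrow> C \<subseteq> R) \<Longrightarrow> transversal (S \<inter> R) \<C>"
  unfolding transversal_def by blast

lemma two_point_transversal:
  assumes AB: "A \<inter> B = {a}" and CD: "C \<inter> D = {f}" and disj: "(A \<union> B) \<inter> (C \<union> D) = {}"
    and "transversal {y, p} {A, B, C, D}"
  shows "{y, p} = {a, f}"
proof -
  have meets: "y \<in> A \<or> p \<in> A" "y \<in> B \<or> p \<in> B" "y \<in> C \<or> p \<in> C" "y \<in> D \<or> p \<in> D"
    using assms(4) unfolding transversal_def by auto
  show ?thesis
  proof (cases "y \<in> A \<union> B")
    case True
    then have "p \<in> C" "p \<in> D" using meets(3,4) disj by auto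
    then have "p = f" "p \<notin> A \<union> B" using CD disj by auto
    then have "y = a" using meets(1,2) AB by auto
    then show ?thesis using \<open>p = f\<close> by simp
  next
    case False
    then have "p \<in> A" "p \<in> B" using meets(1,2) by auto
    then have "p = a" "p \<notin> C \<union> D" using AB disj by auto
    then have "y = f" using meets(3,4) CD by auto
    then show ?thesis using \<open>p = a\<close> by auto
  qed
qed

lemma proper_edge_colouring_subset:
  "proper_edge_colouring E \<psi> \<Longrightarrow> E' \<subseteq> E \<Longrightarrow> proper_edge_colouring E' \<psi>"
  unfolding proper_edge_colouring_def by blast

lemma proper_edge_colouringD:
  assumes "proper_edge_colouring E \<psi>" "e \<in> E" "e' \<in> E" "e \<noteq> e'" "x \<in> e" "x \<in> e'"
  shows "\<psi> e \<noteq> \<psi> e'"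
proof -
  have "e \<inter> e' \<noteq> {}" using assms(5,6) by blast
  then show ?thesis using assms(1-4) unfolding proper_edge_colouring_def by simp
qed

lemma proper_edge_colouring_star_inj:
  assumes "proper_edge_colouring E \<psi>" "\<And>i. i \<in> I \<Longrightarrow> {x, v i} \<in> E" "inj_on v I"
  shows "inj_on (\<lambda>i. \<psi> {x, v i}) I"
proof (rule inj_onI, rule ccontr)
  fix i j assume ij: "i \<in> I" "j \<in> I" "\<psi> {x, v i} = \<psi> {x, v j}" "i \<noteq> j"
  have "{x, v i} \<noteq> {x, v j}"
  proof
    assume "{x, v i} = {x, v j}"
    then have "v i = v j" by (auto simp: doubleton_eq_iff)
    then show False using assms(3) ij(1,2,4) by (simp add: inj_on_eq_iff)
  qed
  moreover have "{x, v i} \<in> E" "{x, v j} \<in> E" using assms(2) ij(1,2) by auto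
  ultimately show False using proper_edge_colouringD[OF assms(1), of _ _ x] ij(3) by simp
qed

lemma pairs_hit_exactly_once:
  fixes s :: "nat \<Rightarrow> 'c"
  assumes s_inj: "inj_on s {1..2*n}" and "finite R" "card R \<le> n"
    and hit: "\<And>k. k \<in> {1..n} \<Longrightarrow> s (2*k - 1) \<in> R \<or> s (2*k) \<in> R"
  shows "card R = n" and "\<And>k. k \<in> {1..n} \<Longrightarrow> \<not> (s (2*k - 1) \<in> R \<and> s (2*k) \<in> R)"
proof -
  define J where "J = {i\<in>{1..2*n}. s i \<in> R}"
  define pair where "pair i = (i + 1) div 2" for i :: nat
  have "pair ` J = {1..n}"
  proof
    show "pair ` J \<subseteq> {1..n}" by (auto simp: J_def pair_def)
    show "{1..n} \<subseteq> pair ` J"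
    proof
      fix k assume k: "k \<in> {1..n}"
      have "pair (2*k - 1) = k" "pair (2*k) = k" using k by (auto simp: pair_def)
      moreover have "2*k - 1 \<in> {1..2*n}" "2*k \<in> {1..2*n}" using k by auto
      ultimately show "k \<in> pair ` J"
        using hit[OF k] unfolding J_def by (metis (mono_tags, lifting) image_eqI mem_Collect_eq)
    qed
  qed
  have "finite J" by (simp add: J_def)
  have "card J \<le> card R"
  proof (rule card_inj_on_le[of s])
    show "inj_on s J" by (rule inj_on_subset[OF s_inj]) (auto simp: J_def)
  qed (use \<open>finite R\<close> in \<open>auto simp: J_def\<close>)
  moreover have "n \<le> card J"
    using card_image_le[OF \<open>finite J\<close>, of pair] \<open>pair ` J = {1..n}\<close> by simp
  ultimately show "card R = n" using \<open>card R \<le> n\<close> by simp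
  have "inj_on pair J"
    using \<open>finite J\<close> \<open>pair ` J = {1..n}\<close> \<open>card J \<le> card R\<close> \<open>card R = n\<close> \<open>n \<le> card J\<close>
    by (intro eq_card_imp_inj_on) auto
  show "\<not> (s (2*k - 1) \<in> R \<and> s (2*k) \<in> R)" if k: "k \<in> {1..n}" for k
  proof
    assume "s (2*k - 1) \<in> R \<and> s (2*k) \<in> R"
    then have "2*k - 1 \<in> J" "2*k \<in> J" using k by (auto simp: J_def)
    moreover have "pair (2*k - 1) = pair (2*k)" using k by (auto simp: pair_def)
    ultimately show False using k inj_onD[OF \<open>inj_on pair J\<close>] by fastforce
  qed
qed

lemma T10_spoke: "1 \<le> i \<Longrightarrow> i \<le> 20 \<Longrightarrow> {X, V i} \<in> T10_edges"
  unfolding T10_edges_def by blast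

lemma triangle_in_T10:
  assumes "1 \<le> k" "k \<le> 10"
  shows "triangle_in T10_edges X (V (2*k - 1)) (V (2*k))"
proof -
  have "{V (2*k - 1), V (2*k)} \<in> T10_edges" using assms unfolding T10_edges_def by blast
  then show ?thesis using assms T10_spoke[of "2*k - 1"] T10_spoke[of "2*k"]
    by (auto simp: triangle_in_def)
qed

lemma finite_R7_edges: "finite R7_edges"
  by (simp add: R7_edges_def)

lemma card_R7_edges: "card R7_edges = 10"
  by (simp add: R7_edges_def doubleton_eq_iff)

definition R7_triangle_colours :: "(vert set \<Rightarrow> 'c) \<Rightarrow> 'c set set" where
  "R7_triangle_colours \<psi> =
     {\<psi> ` tri_edges (U 1) (U 2) (W 1), \<psi> ` tri_edges (U 1) (U 2) (W 2),
      \<psi> ` tri_edges (U 2) (U 3) (W 3), \<psi> ` tri_edges (U 2) (U 3) (W 4)}"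

lemma R7_triangle_colours_triangle_in:
  assumes "C \<in> R7_triangle_colours \<psi>"
  shows "\<exists>a b c. triangle_in R7_edges a b c \<and> C = \<psi> ` tri_edges a b c"
proof -
  have "triangle_in R7_edges (U 1) (U 2) (W 1)" "triangle_in R7_edges (U 1) (U 2) (W 2)"
    "triangle_in R7_edges (U 2) (U 3) (W 3)" "triangle_in R7_edges (U 2) (U 3) (W 4)"
    by (simp_all add: triangle_in_def R7_edges_def)
  then show ?thesis using assms unfolding R7_triangle_colours_def by blast
qed

lemma R7_triangle_colours_subset:
  assumes "C \<in> R7_triangle_colours \<psi>"
  shows "C \<subseteq> \<psi> ` R7_edges"
proof -
  have "tri_edges (U 1) (U 2) (W 1) \<subseteq> R7_edges" "tri_edges (U 1) (U 2) (W 2) \<subseteq> R7_edges"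
    "tri_edges (U 2) (U 3) (W 3) \<subseteq> R7_edges" "tri_edges (U 2) (U 3) (W 4) \<subseteq> R7_edges"
    by (simp_all add: tri_edges_def R7_edges_def)
  then show ?thesis using assms unfolding R7_triangle_colours_def by blast
qed

text \<open>A colour class is a matching. Meeting both triangles through u1 forces it to contain an
  edge of theirs at u2, and likewise for the triangles through u3; these are two different edges
  at u2.\<close>
lemma no_singleton_transversal_R7:
  assumes proper: "proper_edge_colouring R7_edges \<psi>"
  shows "\<not> transversal {p} (R7_triangle_colours \<psi>)"
proof
  let ?A = "tri_edges (U 1) (U 2) (W 1)" and ?B = "tri_edges (U 1) (U 2) (W 2)"
  let ?C = "tri_edges (U 2) (U 3) (W 3)" and ?D = "tri_edges (U 2) (U 3) (W 4)"
  have sub: "?A \<union> ?B \<union> ?C \<union> ?D \<subseteq> R7_edges" by (simp add: tri_edges_def R7_edges_def)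
  note clash = proper_edge_colouringD[OF proper]
  assume "transversal {p} (R7_triangle_colours \<psi>)"
  then have "p \<in> \<psi> ` ?A" "p \<in> \<psi> ` ?B" "p \<in> \<psi> ` ?C" "p \<in> \<psi> ` ?D"
    by (simp_all only: transversal_singleton R7_triangle_colours_def ball_simps)
  then obtain eA eB eC eD where e: "eA \<in> ?A" "eB \<in> ?B" "eC \<in> ?C" "eD \<in> ?D"
    and col: "p = \<psi> eA" "p = \<psi> eB" "p = \<psi> eC" "p = \<psi> eD"
    by blast
  have R7: "eA \<in> R7_edges" "eB \<in> R7_edges" "eC \<in> R7_edges" "eD \<in> R7_edges"
    using e sub by blast+
  obtain f where f: "f \<in> ?A \<union> ?B" "U 2 \<in> f" "p = \<psi> f"
  proof (cases "U 2 \<in> eA \<or> U 2 \<in> eB")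
    case True then show ?thesis using that e col by blast
  next
    case False
    then have "eA = {U 1, W 1}" "eB = {U 1, W 2}" using e by (auto simp: tri_edges_def)
    then show ?thesis using clash[of eA eB "U 1"] R7 col by (simp add: doubleton_eq_iff)
  qed
  obtain g where g: "g \<in> ?C \<union> ?D" "U 2 \<in> g" "p = \<psi> g"
  proof (cases "U 2 \<in> eC \<or> U 2 \<in> eD")
    case True then show ?thesis using that e col by blast
  next
    case False
    then have "eC = {U 3, W 3}" "eD = {U 3, W 4}" using e by (auto simp: tri_edges_def)
    then show ?thesis using clash[of eC eD "U 3"] R7 col by (simp add: doubleton_eq_iff)
  qed
  have "(?A \<union> ?B) \<inter> (?C \<union> ?D) = {}" by (simp add: tri_edges_def doubleton_eq_iff)
  then have "f \<noteq> g" using f(1) g(1) by blast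
  moreover have "f \<in> R7_edges" "g \<in> R7_edges" using f(1) g(1) sub by auto
  ultimately show False using clash[of f g "U 2"] f(2,3) g(2,3) by simp
qed

lemma two_point_transversal_R7:
  assumes inj: "inj_on \<psi> R7_edges" and "transversal {y, p} (R7_triangle_colours \<psi>)"
  shows "{y, p} = {\<psi> {U 1, U 2}, \<psi> {U 2, U 3}}"
proof (rule two_point_transversal)
  let ?A = "tri_edges (U 1) (U 2) (W 1)" and ?B = "tri_edges (U 1) (U 2) (W 2)"
  let ?C = "tri_edges (U 2) (U 3) (W 3)" and ?D = "tri_edges (U 2) (U 3) (W 4)"
  have sub: "?A \<union> ?B \<subseteq> R7_edges" "?C \<union> ?D \<subseteq> R7_edges" "?A \<union> ?B \<union> (?C \<union> ?D) \<subseteq> R7_edges"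
    by (simp_all add: tri_edges_def R7_edges_def)
  have "\<psi> ` ?A \<inter> \<psi> ` ?B = \<psi> ` (?A \<inter> ?B)"
    using inj_on_image_Int[OF inj] sub(1) by blast
  also have "?A \<inter> ?B = {{U 1, U 2}}" by (simp add: tri_edges_def doubleton_eq_iff)
  finally show "\<psi> ` ?A \<inter> \<psi> ` ?B = {\<psi> {U 1, U 2}}" by simp
  have "\<psi> ` ?C \<inter> \<psi> ` ?D = \<psi> ` (?C \<inter> ?D)"
    using inj_on_image_Int[OF inj] sub(2) by blast
  also have "?C \<inter> ?D = {{U 2, U 3}}" by (simp add: tri_edges_def doubleton_eq_iff)
  finally show "\<psi> ` ?C \<inter> \<psi> ` ?D = {\<psi> {U 2, U 3}}" by simp
  have "(\<psi> ` ?A \<union> \<psi> ` ?B) \<inter> (\<psi> ` ?C \<union> \<psi> ` ?D) = \<psi> ` ((?A \<union> ?B) \<inter> (?C \<union> ?D))"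
    using inj_on_image_Int[OF inj] sub by (simp add: image_Un)
  also have "(?A \<union> ?B) \<inter> (?C \<union> ?D) = {}" by (simp add: tri_edges_def doubleton_eq_iff)
  finally show "(\<psi> ` ?A \<union> \<psi> ` ?B) \<inter> (\<psi> ` ?C \<union> \<psi> ` ?D) = {}" by simp
qed (use assms(2) in \<open>simp add: R7_triangle_colours_def\<close>)

lemma R7_transversal_triple_outer_coloured:
  assumes "proper_edge_colouring R7_edges \<psi>" and "transversal {y, p, z} (R7_triangle_colours \<psi>)"
  shows "y \<in> \<psi> ` R7_edges \<or> z \<in> \<psi> ` R7_edges"
proof (rule ccontr)
  assume "\<not> ?thesis"
  then have "{y, p, z} \<inter> \<psi> ` R7_edges \<subseteq> {p}" by blast
  moreover have "transversal ({y, p, z} \<inter> \<psi> ` R7_edges) (R7_triangle_colours \<psi>)"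
    using assms(2) R7_triangle_colours_subset by (rule transversal_Int)
  ultimately show False
    using no_singleton_transversal_R7[OF assms(1)] transversal_mono by blast
qed

lemma R7_transversal_triple_shared_edge_colour:
  assumes inj: "inj_on \<psi> R7_edges" and transv: "transversal {y, p, z} (R7_triangle_colours \<psi>)"
    and "y \<notin> \<psi> ` R7_edges \<or> z \<notin> \<psi> ` R7_edges"
  shows "y \<in> {\<psi> {U 1, U 2}, \<psi> {U 2, U 3}} \<or> z \<in> {\<psi> {U 1, U 2}, \<psi> {U 2, U 3}}"
proof -
  have "transversal ({y, p, z} \<inter> \<psi> ` R7_edges) (R7_triangle_colours \<psi>)"
    using transv R7_triangle_colours_subset by (rule transversal_Int)
  moreover have "{y, p, z} \<inter> \<psi> ` R7_edges \<subseteq> {z, p} \<or> {y, p, z} \<inter> \<psi> ` R7_edges \<subseteq> {y, p}"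
    using assms(3) by blast
  ultimately have "transversal {z, p} (R7_triangle_colours \<psi>) \<or> transversal {y, p} (R7_triangle_colours \<psi>)"
    using transversal_mono by blast
  then show ?thesis using two_point_transversal_R7[OF inj] by blast
qed

lemma T10_spoke_colours_inj:
  assumes "proper_edge_colouring union_edges \<psi>"
  shows "inj_on (\<lambda>i. \<psi> {X, V i}) {1..2*10}"
  using assms by (rule proper_edge_colouring_star_inj) (simp_all add: union_edges_def T10_spoke inj_on_def)

lemma R7_colouring_inj_if_T10_transversal:
  assumes proper: "proper_edge_colouring union_edges \<psi>"
    and transv: "\<And>k. k \<in> {1..10} \<Longrightarrow> transversal
      {\<psi> {X, V (2*k - 1)}, \<psi> {V (2*k - 1), V (2*k)}, \<psi> {X, V (2*k)}} (R7_triangle_colours \<psi>)"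
  shows "inj_on \<psi> R7_edges"
    and "\<And>k. k \<in> {1..10} \<Longrightarrow> \<psi> {X, V (2*k - 1)} \<notin> \<psi> ` R7_edges \<or> \<psi> {X, V (2*k)} \<notin> \<psi> ` R7_edges"
proof -
  define R where "R = \<psi> ` R7_edges"
  have proper_R7: "proper_edge_colouring R7_edges \<psi>"
    using proper by (rule proper_edge_colouring_subset) (simp add: union_edges_def)
  have R: "finite R" "card R \<le> 10"
    using card_image_le[OF finite_R7_edges, of \<psi>] by (simp_all add: R_def finite_R7_edges card_R7_edges)
  have hit: "\<psi> {X, V (2*k - 1)} \<in> R \<or> \<psi> {X, V (2*k)} \<in> R" if "k \<in> {1..10}" for k
    using R7_transversal_triple_outer_coloured[OF proper_R7 transv[OF that]] unfolding R_def .
  note pairs = pairs_hit_exactly_once[where s = "\<lambda>i. \<psi> {X, V i}", OF T10_spoke_colours_inj[OF proper] R]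
  have "card R = 10" by (rule pairs(1)) (rule hit)
  then show "inj_on \<psi> R7_edges"
    by (intro eq_card_imp_inj_on[OF finite_R7_edges]) (simp add: R_def card_R7_edges)
  show "\<psi> {X, V (2*k - 1)} \<notin> \<psi> ` R7_edges \<or> \<psi> {X, V (2*k)} \<notin> \<psi> ` R7_edges"
    if "k \<in> {1..10}" for k
    using pairs(2)[of k] hit that unfolding R_def by blast
qed

lemma T10_triangles_not_all_transversal:
  assumes proper: "proper_edge_colouring union_edges \<psi>"
    and transv: "\<And>k. k \<in> {1..10} \<Longrightarrow> transversal
      {\<psi> {X, V (2*k - 1)}, \<psi> {V (2*k - 1), V (2*k)}, \<psi> {X, V (2*k)}} (R7_triangle_colours \<psi>)"
  shows False
proof -
  let ?M = "{\<psi> {U 1, U 2}, \<psi> {U 2, U 3}}"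
  have R7_inj: "inj_on \<psi> R7_edges"
    by (rule R7_colouring_inj_if_T10_transversal(1)[OF proper]) (rule transv)
  have centre: "\<psi> {X, V (2*k - 1)} \<in> ?M \<or> \<psi> {X, V (2*k)} \<in> ?M" if k: "k \<in> {1..10}" for k
  proof (rule R7_transversal_triple_shared_edge_colour[OF R7_inj transv[OF k]])
    show "\<psi> {X, V (2*k - 1)} \<notin> \<psi> ` R7_edges \<or> \<psi> {X, V (2*k)} \<notin> \<psi> ` R7_edges"
      by (rule R7_colouring_inj_if_T10_transversal(2)[OF proper]) (fact transv, fact k)
  qed
  obtain i1 i2 i3 where i: "i1 \<in> {1, 2}" "i2 \<in> {3, 4}" "i3 \<in> {5, 6}"
    and "\<psi> {X, V i1} \<in> ?M" "\<psi> {X, V i2} \<in> ?M" "\<psi> {X, V i3} \<in> ?M"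
    using centre[of 1] centre[of 2] centre[of 3] by auto
  moreover have "\<psi> {X, V i1} \<noteq> \<psi> {X, V i2}" "\<psi> {X, V i1} \<noteq> \<psi> {X, V i3}"
    "\<psi> {X, V i2} \<noteq> \<psi> {X, V i3}"
    using i by (auto simp: inj_on_eq_iff[OF T10_spoke_colours_inj[OF proper]])
  ultimately show False by auto
qed

theorem claim5p3:
  fixes \<psi> :: "vert set \<Rightarrow> 'c"
  assumes "proper_edge_colouring union_edges \<psi>"
  shows "\<exists>a b c a' b' c'. triangle_in T10_edges a b c \<and> triangle_in R7_edges a' b' c' \<and>
           \<psi> ` tri_edges a b c \<inter> \<psi> ` tri_edges a' b' c' = {}"
proof (rule ccontr)
  assume contra: "\<not> ?thesis"
  let ?claim = ?thesis
  have meet: "\<psi> ` tri_edges a b c \<inter> \<psi> ` tri_edges a' b' c' \<noteq> {}"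
    if "triangle_in T10_edges a b c" "triangle_in R7_edges a' b' c'" for a b c a' b' c'
  proof
    assume "\<psi> ` tri_edges a b c \<inter> \<psi> ` tri_edges a' b' c' = {}"
    with that have ?claim by (intro exI conjI)
    with contra show False by contradiction
  qed
  show False
  proof (rule T10_triangles_not_all_transversal[OF assms], unfold transversal_def, intro ballI)
    fix k :: nat and C assume "k \<in> {1..10}" "C \<in> R7_triangle_colours \<psi>"
    then obtain a b c where "triangle_in R7_edges a b c" "C = \<psi> ` tri_edges a b c"
      using R7_triangle_colours_triangle_in by blast
    then show "{\<psi> {X, V (2*k - 1)}, \<psi> {V (2*k - 1), V (2*k)}, \<psi> {X, V (2*k)}} \<inter> C \<noteq> {}"
      using meet[OF triangle_in_T10] \<open>k \<in> {1..10}\<close> by (simp add: tri_edges_def)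
  qed
qed

end
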